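(* Let $(B_i)_{i}$ be a family of open horoballs in $\mathbb{H}_m$ with pairwise disjoint closures, and let $Q=\bigcup_iB_i$. Then (1) ${\sf{dist}}_{Q^c}$ is a distance on $\mathbb{H}_m\setminus Q$ (i.e., it takes only finite values); (2) for every index $i$ and all $x,y\in\partial B_i$, ${\sf{dist}}_{Q^c}(x,y)={\sf{dist}}_{\partial B_i}(x,y)$.
   Context: $\mathbb{H}_m$ ($m$ possibly infinite) is the hyperbolic space with distance ${\sf{dist}}$. For a subset $W$ of a metric space $(X,d)$ and $x,y\notin W$, ${\sf{dist}}_{W^c}(x,y)=\sup_{\varepsilon>0}\inf\{\sum_{i=0}^{n-1}d(x_i,x_{i+1})\}$ over chains $x_0=x,\dots,x_n=y$ in $X\setminus W$ with $d(x_i,x_{i+1})\le\varepsilon$; for $Y\subset X$, ${\sf{dist}}_Y$ denotes the induced intrinsic distance on $Y$. An open horoball is a set $\{v:0<\langle v|\xi\rangle<\epsilon\}$ with $\xi$ isotropic, $\epsilon>0$. *)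

theory Defs
  imports "HOL-Analysis.Analysis"
begin

text \<open>Minkowski space R^{1,m} modelled as real x H with H a real Hilbert space
  (H of any dimension, finite or infinite). Bilinear form of signature (1,m).\<close>

definition mink :: "real \<times> 'a::real_inner \<Rightarrow> real \<times> 'a \<Rightarrow> real" where
  "mink v w = fst v * fst w - inner (snd v) (snd w)"

definition hyp_space :: "(real \<times> 'a::{real_inner,complete_space}) set" where
  "hyp_space = {v. mink v v = 1 \<and> fst v > 0}"

definition hdist :: "real \<times> 'a::real_inner \<Rightarrow> real \<times> 'a \<Rightarrow> real" where
  "hdist v w = arcosh (mink v w)"

definition isotropic :: "real \<times> 'a::real_inner \<Rightarrow> bool" where
  "isotropic \<xi> \<longleftrightarrow> \<xi> \<noteq> 0 \<and> mink \<xi> \<xi> = 0"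

definition open_horoball :: "(real \<times> 'a::{real_inner,complete_space}) set \<Rightarrow> bool" where
  "open_horoball B \<longleftrightarrow> (\<exists>\<xi> e. isotropic \<xi> \<and> e > 0 \<and>
      B = {v \<in> hyp_space. 0 < mink v \<xi> \<and> mink v \<xi> < e})"

definition hclosure :: "(real \<times> 'a::{real_inner,complete_space}) set \<Rightarrow> (real \<times> 'a) set" where
  "hclosure A = {x \<in> hyp_space. \<forall>e>0. \<exists>y\<in>A. hdist x y < e}"

definition hboundary :: "(real \<times> 'a::{real_inner,complete_space}) set \<Rightarrow> (real \<times> 'a) set" where
  "hboundary A = hclosure A \<inter> hclosure (hyp_space - A)"

text \<open>Chain (intrinsic) distance on a subset S of a metric space with distance d:
  sup over eps>0 of inf of lengths of eps-chains from x to y lying in S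
  (an infimum over the empty set is +infinity).\<close>
definition chain_dist :: "('p \<Rightarrow> 'p \<Rightarrow> real) \<Rightarrow> 'p set \<Rightarrow> 'p \<Rightarrow> 'p \<Rightarrow> ereal" where
  "chain_dist d S x y =
     (SUP eps\<in>{0<..}. INF L \<in> {(\<Sum>i<n. d (p i) (p (Suc i))) | p n.
          p 0 = x \<and> p n = y \<and> (\<forall>i\<le>n. p i \<in> S) \<and> (\<forall>i<n. d (p i) (p (Suc i)) \<le> eps)}.
        ereal L)"

end

theory Submission
  imports Defs
begin

text \<open>
  For a horoball \<open>{v. 0 < \<langle>v|\<xi>\<rangle> < e}\<close>, sliding each point along the geodesic through \<open>\<xi>\<close>
  until \<open>\<langle>v|\<xi>\<rangle> = e\<close> projects hyperbolic space onto the bounding horosphere. By the Busemann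
  inequality \<open>\<langle>v|\<xi>\<rangle>\<^sup>2 + \<langle>w|\<xi>\<rangle>\<^sup>2 \<le> 2 \<langle>v|\<xi>\<rangle> \<langle>w|\<xi>\<rangle> \<langle>v|w\<rangle>\<close> this projection
  does not increase distances between points outside the horoball, and it is Lipschitz on
  bounded sets. Since the closures of the horoballs are disjoint, each horosphere \<open>\<partial>B\<^sub>i\<close> lies
  in the complement of \<open>Q\<close>; so projecting chains in the complement onto \<open>\<partial>B\<^sub>i\<close> gives (2).
  Retracting every horoball onto its horosphere gives a map onto the complement of \<open>Q\<close> that is
  Lipschitz on bounded sets; applied to a finely subdivided geodesic from \<open>x\<close> to \<open>y\<close> it
  produces arbitrarily fine chains in the complement of bounded length, which gives (1).
\<close>

section \<open>The Minkowski form\<close>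

lemma mink_sym: "mink v w = mink w v"
  by (simp add: mink_def inner_commute)

lemma mink_add_left: "mink (v + w) u = mink v u + mink w u"
  by (simp add: mink_def inner_add_left algebra_simps)

lemma mink_add_right: "mink u (v + w) = mink u v + mink u w"
  by (simp add: mink_def inner_add_right algebra_simps)

lemma mink_diff_left: "mink (v - w) u = mink v u - mink w u"
  by (simp add: mink_def inner_diff_left algebra_simps)

lemma mink_diff_right: "mink u (v - w) = mink u v - mink u w"
  by (simp add: mink_def inner_diff_right algebra_simps)

lemma mink_scaleR_left: "mink (r *\<^sub>R v) u = r * mink v u"
  by (simp add: mink_def algebra_simps)

lemma mink_scaleR_right: "mink u (r *\<^sub>R v) = r * mink u v"
  by (simp add: mink_def algebra_simps)

lemma mink_minus_left: "mink (- v) u = - mink v u"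
  by (simp add: mink_def)

lemmas mink_simps = mink_add_left mink_add_right mink_diff_left mink_diff_right
  mink_scaleR_left mink_scaleR_right mink_minus_left

lemma mink_self_nonpos_if_orthogonal:
  fixes p y :: "real \<times> 'a::real_inner"
  assumes "snd y \<bullet> snd y \<le> (fst y)\<^sup>2" "fst y \<noteq> 0" "mink p y = 0"
  shows "mink p p \<le> 0"
proof -
  have e: "fst p * fst y = snd p \<bullet> snd y" using assms(3) by (simp add: mink_def)
  have "(fst p * fst y)\<^sup>2 \<le> (snd p \<bullet> snd p) * (snd y \<bullet> snd y)"
    unfolding e by (rule Cauchy_Schwarz_ineq)
  also have "\<dots> \<le> (snd p \<bullet> snd p) * (fst y)\<^sup>2"
    by (rule mult_left_mono[OF assms(1)]) simp
  finally have "(fst p)\<^sup>2 * (fst y)\<^sup>2 \<le> (snd p \<bullet> snd p) * (fst y)\<^sup>2"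
    by (simp add: power_mult_distrib)
  hence "(fst p)\<^sup>2 \<le> snd p \<bullet> snd p" using assms(2) by simp
  thus ?thesis by (simp add: mink_def power2_eq_square)
qed

lemma hyp_space_snd_inner_le: "v \<in> hyp_space \<Longrightarrow> snd v \<bullet> snd v \<le> (fst v)\<^sup>2"
  by (simp add: hyp_space_def mink_def power2_eq_square)

lemma mink_self_hyp_space: "v \<in> hyp_space \<Longrightarrow> mink v v = 1"
  by (simp add: hyp_space_def)

lemma mink_hyp_space_ge_1:
  assumes "v \<in> hyp_space" "w \<in> hyp_space"
  shows "1 \<le> mink v w"
proof -
  define a where "a = norm (snd v)"
  define b where "b = norm (snd w)"
  have v: "(fst v)\<^sup>2 = 1 + a\<^sup>2" and w: "(fst w)\<^sup>2 = 1 + b\<^sup>2"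
  proof -
    have "a\<^sup>2 = snd v \<bullet> snd v" "b\<^sup>2 = snd w \<bullet> snd w"
      by (simp_all add: a_def b_def power2_norm_eq_inner)
    thus "(fst v)\<^sup>2 = 1 + a\<^sup>2" "(fst w)\<^sup>2 = 1 + b\<^sup>2"
      using assms by (auto simp: hyp_space_def mink_def power2_eq_square)
  qed
  have pos: "fst v > 0" "fst w > 0" using assms by (auto simp: hyp_space_def)
  have "(fst v * fst w)\<^sup>2 - (1 + a * b)\<^sup>2 = (a - b)\<^sup>2"
    unfolding power_mult_distrib v w by (simp add: algebra_simps power2_eq_square)
  hence "(1 + a * b)\<^sup>2 \<le> (fst v * fst w)\<^sup>2" using zero_le_power2[of "a - b"] by linarith
  hence "1 + a * b \<le> fst v * fst w"
    by (rule power2_le_imp_le) (use pos in auto)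
  moreover have "snd v \<bullet> snd w \<le> a * b" unfolding a_def b_def by (rule norm_cauchy_schwarz)
  ultimately show ?thesis by (simp add: mink_def)
qed

lemma isotropic_mink_self: "isotropic \<xi> \<Longrightarrow> mink \<xi> \<xi> = 0"
  by (simp add: isotropic_def)

lemma isotropic_snd_inner: "isotropic \<xi> \<Longrightarrow> snd \<xi> \<bullet> snd \<xi> = (fst \<xi>)\<^sup>2"
  by (simp add: isotropic_def mink_def power2_eq_square)

lemma isotropic_fst_nonzero:
  assumes "isotropic \<xi>"
  shows "fst \<xi> \<noteq> 0"
proof
  assume "fst \<xi> = 0"
  hence "snd \<xi> = 0" using isotropic_snd_inner[OF assms] by simp
  with \<open>fst \<xi> = 0\<close> have "\<xi> = 0" by (simp add: prod_eq_iff)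
  thus False using assms by (simp add: isotropic_def)
qed

lemma mink_hyp_space_isotropic_sign:
  assumes v: "v \<in> hyp_space" and \<xi>: "isotropic \<xi>"
  shows "fst \<xi> > 0 \<Longrightarrow> mink v \<xi> > 0" and "fst \<xi> < 0 \<Longrightarrow> mink v \<xi> < 0"
proof -
  define a where "a = norm (snd v)"
  have "a\<^sup>2 = snd v \<bullet> snd v" by (simp add: a_def power2_norm_eq_inner)
  hence "(fst v)\<^sup>2 = 1 + a\<^sup>2" using v by (auto simp: hyp_space_def mink_def power2_eq_square)
  hence "a\<^sup>2 < (fst v)\<^sup>2" by simp
  hence a: "a < fst v"
    using v by (simp add: a_def hyp_space_def power_less_imp_less_base)
  have "norm (snd \<xi>) = \<bar>fst \<xi>\<bar>"
    using isotropic_snd_inner[OF \<xi>] by (simp add: norm_eq_sqrt_inner)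
  hence cs: "\<bar>snd v \<bullet> snd \<xi>\<bar> \<le> a * \<bar>fst \<xi>\<bar>"
    unfolding a_def by (metis Cauchy_Schwarz_ineq2)
  show "fst \<xi> > 0 \<Longrightarrow> mink v \<xi> > 0"
  proof -
    assume f: "fst \<xi> > 0"
    have "a * fst \<xi> < fst v * fst \<xi>" using a f by simp
    thus ?thesis using cs f unfolding mink_def abs_le_iff by linarith
  qed
  show "fst \<xi> < 0 \<Longrightarrow> mink v \<xi> < 0"
  proof -
    assume f: "fst \<xi> < 0"
    have "a * (- fst \<xi>) < fst v * (- fst \<xi>)" using a f by simp
    thus ?thesis using cs f unfolding mink_def abs_le_iff by linarith
  qed
qed

lemmas mink_hyp_space_future_pos = mink_hyp_space_isotropic_sign(1)

lemma busemann_inequality: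
  assumes v: "v \<in> hyp_space" and w: "w \<in> hyp_space" and \<xi>: "isotropic \<xi>"
  shows "(mink v \<xi>)\<^sup>2 + (mink w \<xi>)\<^sup>2 \<le> 2 * mink v \<xi> * mink w \<xi> * mink v w"
proof -
  define a where "a = mink v \<xi>"
  define b where "b = mink w \<xi>"
  define z where "z = b *\<^sub>R v - a *\<^sub>R w"
  have "mink z \<xi> = 0" by (simp add: z_def mink_simps a_def b_def)
  hence "mink z z \<le> 0"
    by (intro mink_self_nonpos_if_orthogonal[OF _ isotropic_fst_nonzero[OF \<xi>]])
      (simp_all add: isotropic_snd_inner[OF \<xi>])
  moreover have "mink z z = b\<^sup>2 + a\<^sup>2 - 2 * a * b * mink v w"
    using v w by (simp add: z_def mink_simps hyp_space_def mink_sym[of w v]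
        power2_eq_square algebra_simps)
  ultimately show ?thesis by (simp add: a_def b_def)
qed

lemma busemann_inequality_ratio:
  assumes v: "v \<in> hyp_space" and w: "w \<in> hyp_space" and \<xi>: "isotropic \<xi>"
    and a: "mink v \<xi> > 0" and b: "mink w \<xi> > 0"
  shows "mink w \<xi> / mink v \<xi> + mink v \<xi> / mink w \<xi> \<le> 2 * mink v w"
proof -
  have "((mink v \<xi>)\<^sup>2 + (mink w \<xi>)\<^sup>2) / (mink v \<xi> * mink w \<xi>) \<le> 2 * mink v w"
    using busemann_inequality[OF v w \<xi>] a b by (simp add: divide_le_eq mult.commute mult.left_commute)
  moreover have "((mink v \<xi>)\<^sup>2 + (mink w \<xi>)\<^sup>2) / (mink v \<xi> * mink w \<xi>)
     = mink w \<xi> / mink v \<xi> + mink v \<xi> / mink w \<xi>"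
    using a b by (simp add: field_simps power2_eq_square)
  ultimately show ?thesis by simp
qed

lemma mink_Cauchy_Schwarz_orthogonal:
  assumes y: "y \<in> hyp_space" and p: "mink p y = 0" and q: "mink q y = 0"
  shows "(mink p q)\<^sup>2 \<le> mink p p * mink q q"
proof -
  define P where "P = mink p p"
  define B where "B = mink p q"
  define C where "C = mink q q"
  have "mink (p + t *\<^sub>R q) (p + t *\<^sub>R q) \<le> 0" for t
    by (rule mink_self_nonpos_if_orthogonal[OF hyp_space_snd_inner_le[OF y]])
      (use y p q in \<open>auto simp: hyp_space_def mink_simps\<close>)
  moreover have "mink (p + t *\<^sub>R q) (p + t *\<^sub>R q) = P + 2 * t * B + t\<^sup>2 * C" for t
    by (simp add: P_def B_def C_def mink_simps mink_sym[of q p] power2_eq_square algebra_simps)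
  ultimately have quadratic: "P + 2 * t * B + t\<^sup>2 * C \<le> 0" for t by metis
  have "C \<le> 0" unfolding C_def
    by (rule mink_self_nonpos_if_orthogonal[OF hyp_space_snd_inner_le[OF y]])
      (use y q in \<open>auto simp: hyp_space_def\<close>)
  show ?thesis unfolding P_def[symmetric] B_def[symmetric] C_def[symmetric]
  proof (cases "C = 0")
    case True
    have "B = 0"
    proof (rule ccontr)
      assume "B \<noteq> 0"
      thus False using quadratic[of "(1 - P) / (2 * B)"] True by (simp add: field_simps)
    qed
    thus "B\<^sup>2 \<le> P * C" using True by simp
  next
    case False
    with \<open>C \<le> 0\<close> have "C < 0" by simp
    hence "P - B\<^sup>2 / C \<le> 0"
      using quadratic[of "- B / C"] by (simp add: power2_eq_square field_simps)
    thus "B\<^sup>2 \<le> P * C" using \<open>C < 0\<close> by (simp add: field_simps)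
  qed
qed

section \<open>Hyperbolic distance\<close>

lemma arcosh_real_mono:
  assumes "1 \<le> x" "x \<le> (y::real)"
  shows "arcosh x \<le> arcosh y"
  using arcosh_less_iff_real[of y x] assms by (simp add: not_less[symmetric])

lemma x_plus_inverse_mono:
  assumes "1 \<le> l" "l \<le> (r::real)"
  shows "l + 1/l \<le> r + 1/r"
proof -
  have "r + 1/r - (l + 1/l) = (r - l) * (1 - 1/(r*l))" using assms by (simp add: field_simps)
  moreover have "1 * 1 \<le> r * l" by (rule mult_mono) (use assms in auto)
  hence "1/(r*l) \<le> 1" using assms by (simp add: field_simps)
  ultimately have "r + 1/r - (l + 1/l) \<ge> 0" using assms by simp
  thus ?thesis by simp
qed

lemma half_x_plus_inverse_gt_1:
  assumes "1 < (r::real)"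
  shows "1 < (r + 1/r) / 2"
proof -
  have "2 * r < r * r + 1" using assms zero_less_power2[of "r - 1"] by (simp add: power2_eq_square algebra_simps)
  thus ?thesis using assms by (simp add: field_simps)
qed

lemma sinh_mult_ge:
  assumes m: "1 \<le> (m::real)" and u: "0 \<le> u"
  shows "m * sinh u \<le> sinh (m * u)"
proof -
  have "(\<lambda>u. sinh (m * u) - m * sinh u) 0 \<le> (\<lambda>u. sinh (m * u) - m * sinh u) u"
  proof (rule DERIV_nonneg_imp_nondecreasing[OF u])
    fix x :: real assume x: "0 \<le> x" "x \<le> u"
    have "((\<lambda>u. sinh (m * u) - m * sinh u) has_real_derivative (cosh (m * x) * m - m * cosh x)) (at x)"
      by (auto intro!: derivative_eq_intros)
    moreover have "cosh x \<le> cosh (m * x)"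
      using cosh_real_nonneg_le_iff[of x "m * x"] x m by (simp add: mult_le_cancel_right1)
    hence "cosh (m * x) * m - m * cosh x \<ge> 0" using m by (simp add: algebra_simps mult_left_mono)
    ultimately show "\<exists>y. ((\<lambda>u. sinh (m * u) - m * sinh u) has_real_derivative y) (at x) \<and> 0 \<le> y"
      by blast
  qed
  thus ?thesis by simp
qed

lemma cosh_mult_ge:
  assumes m: "1 \<le> (m::real)" and t: "0 \<le> t"
  shows "1 + m\<^sup>2 * (cosh t - 1) \<le> cosh (m * t)"
proof -
  have "(\<lambda>u. cosh (m * u) - m\<^sup>2 * cosh u) 0 \<le> (\<lambda>u. cosh (m * u) - m\<^sup>2 * cosh u) t"
  proof (rule DERIV_nonneg_imp_nondecreasing[OF t])
    fix x :: real assume x: "0 \<le> x" "x \<le> t"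
    have "((\<lambda>u. cosh (m * u) - m\<^sup>2 * cosh u) has_real_derivative (sinh (m * x) * m - m\<^sup>2 * sinh x)) (at x)"
      by (auto intro!: derivative_eq_intros)
    moreover have "m * sinh x \<le> sinh (m * x)" by (rule sinh_mult_ge[OF m x(1)])
    hence "sinh (m * x) * m - m\<^sup>2 * sinh x \<ge> 0" using m
      by (simp add: power2_eq_square algebra_simps)
    ultimately show "\<exists>y. ((\<lambda>u. cosh (m * u) - m\<^sup>2 * cosh u) has_real_derivative y) (at x) \<and> 0 \<le> y"
      by blast
  qed
  thus ?thesis by (simp add: algebra_simps)
qed

lemma arcosh_le_mult:
  fixes c c' m :: real
  assumes "1 \<le> c" "1 \<le> m" "1 \<le> c'" "c' - 1 \<le> m\<^sup>2 * (c - 1)"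
  shows "arcosh c' \<le> m * arcosh c"
proof -
  have "c' \<le> 1 + m\<^sup>2 * (cosh (arcosh c) - 1)" using assms by simp
  also have "\<dots> \<le> cosh (m * arcosh c)" by (rule cosh_mult_ge) (use assms in auto)
  finally have "arcosh c' \<le> arcosh (cosh (m * arcosh c))" by (rule arcosh_real_mono[OF assms(3)])
  also have "\<dots> = m * arcosh c" by (rule arcosh_cosh_real) (use assms in auto)
  finally show ?thesis .
qed

lemma hdist_sym: "hdist v w = hdist w v"
  by (simp add: hdist_def mink_sym)

lemma hdist_self: "v \<in> hyp_space \<Longrightarrow> hdist v v = 0"
  by (simp add: hdist_def hyp_space_def)

lemma hdist_nonneg: "v \<in> hyp_space \<Longrightarrow> w \<in> hyp_space \<Longrightarrow> 0 \<le> hdist v w"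
  unfolding hdist_def by (rule arcosh_nonneg_real) (rule mink_hyp_space_ge_1)

lemma cosh_hdist: "v \<in> hyp_space \<Longrightarrow> w \<in> hyp_space \<Longrightarrow> cosh (hdist v w) = mink v w"
  unfolding hdist_def by (rule cosh_arcosh_real) (rule mink_hyp_space_ge_1)

lemma hdist_le_iff:
  assumes "v \<in> hyp_space" "w \<in> hyp_space" "0 \<le> d"
  shows "hdist v w \<le> d \<longleftrightarrow> mink v w \<le> cosh d"
  using cosh_real_nonneg_le_iff[OF hdist_nonneg[OF assms(1,2)] assms(3)] cosh_hdist[OF assms(1,2)]
  by simp

lemma hdist_le_if_mink_le:
  "v' \<in> hyp_space \<Longrightarrow> w' \<in> hyp_space \<Longrightarrow> mink v' w' \<le> mink v w \<Longrightarrow> hdist v' w' \<le> hdist v w"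
  unfolding hdist_def by (rule arcosh_real_mono[OF mink_hyp_space_ge_1])

text \<open>Project \<open>x\<close> and \<open>z\<close> to the orthogonal complement of \<open>y\<close>, where the form is negative
  definite, and apply the Cauchy--Schwarz inequality there.\<close>
lemma hdist_triangle:
  assumes x: "x \<in> hyp_space" and y: "y \<in> hyp_space" and z: "z \<in> hyp_space"
  shows "hdist x z \<le> hdist x y + hdist y z"
proof -
  define c1 where "c1 = mink x y"
  define c2 where "c2 = mink y z"
  define c3 where "c3 = mink x z"
  have xx: "mink x x = 1" and yy: "mink y y = 1" and zz: "mink z z = 1"
    using x y z by (simp_all add: mink_self_hyp_space)
  define x' where "x' = x - c1 *\<^sub>R y"
  define z' where "z' = z - c2 *\<^sub>R y"
  have "mink x' y = 0" by (simp add: x'_def mink_simps yy c1_def)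
  moreover have "mink z' y = 0" by (simp add: z'_def mink_simps yy c2_def mink_sym[of z y])
  ultimately have "(mink x' z')\<^sup>2 \<le> mink x' x' * mink z' z'"
    by (rule mink_Cauchy_Schwarz_orthogonal[OF y])
  moreover have "mink x' z' = c3 - c1 * c2"
    by (simp add: x'_def z'_def mink_simps yy c1_def c2_def c3_def mink_sym[of y x] algebra_simps)
  moreover have "mink x' x' = 1 - c1\<^sup>2"
    by (simp add: x'_def mink_simps yy xx c1_def mink_sym[of y x] power2_eq_square algebra_simps)
  moreover have "mink z' z' = 1 - c2\<^sup>2"
    by (simp add: z'_def mink_simps yy zz c2_def mink_sym[of z y] power2_eq_square algebra_simps)
  ultimately have "(c3 - c1 * c2)\<^sup>2 \<le> (c1\<^sup>2 - 1) * (c2\<^sup>2 - 1)" by (simp add: algebra_simps)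
  hence "c3 - c1 * c2 \<le> sqrt (c1\<^sup>2 - 1) * sqrt (c2\<^sup>2 - 1)"
    by (metis real_sqrt_le_mono real_sqrt_mult real_sqrt_abs abs_ge_self order.trans)
  moreover have "c1 \<ge> 1" "c2 \<ge> 1"
    unfolding c1_def c2_def using x y z by (auto intro: mink_hyp_space_ge_1)
  ultimately have "c3 \<le> cosh (arcosh c1) * cosh (arcosh c2) + sinh (arcosh c1) * sinh (arcosh c2)"
    by (simp add: sinh_arcosh_real)
  hence "c3 \<le> cosh (hdist x y + hdist y z)" by (simp add: cosh_add hdist_def c1_def c2_def)
  moreover have "hdist x y + hdist y z \<ge> 0" using hdist_nonneg[OF x y] hdist_nonneg[OF y z] by linarith
  ultimately show ?thesis using hdist_le_iff[OF x z] c3_def by simp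
qed

section \<open>Horoballs and the projection onto a horosphere\<close>

definition horoball :: "real \<times> 'a::{real_inner,complete_space} \<Rightarrow> real \<Rightarrow> (real \<times> 'a) set" where
  "horoball \<xi> e = {v \<in> hyp_space. 0 < mink v \<xi> \<and> mink v \<xi> < e}"

text \<open>For \<open>l = exp t\<close> this is the point at distance \<open>\<bar>t\<bar>\<close> from \<open>v\<close> on the geodesic through
  \<open>v\<close> with endpoint \<open>\<xi>\<close>; the coefficient of \<open>\<xi>\<close> is chosen to keep the point on the
  hyperboloid.\<close>
definition horo_shift :: "real \<times> 'a::real_inner \<Rightarrow> real \<times> 'a \<Rightarrow> real \<Rightarrow> real \<times> 'a" where
  "horo_shift \<xi> v l = l *\<^sub>R v + ((1/l - l) / (2 * mink v \<xi>)) *\<^sub>R \<xi>"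

definition horo_proj :: "real \<Rightarrow> real \<times> 'a::real_inner \<Rightarrow> real \<times> 'a \<Rightarrow> real \<times> 'a" where
  "horo_proj e \<xi> v = horo_shift \<xi> v (e / mink v \<xi>)"

lemma horo_shift_1: "horo_shift \<xi> v 1 = v"
  by (simp add: horo_shift_def)

lemma mink_horo_shift_isotropic:
  assumes "isotropic \<xi>" "mink v \<xi> \<noteq> 0"
  shows "mink (horo_shift \<xi> v l) \<xi> = l * mink v \<xi>"
  using assms by (simp add: horo_shift_def mink_simps isotropic_mink_self)

lemma mink_horo_shift_self:
  assumes "mink v \<xi> \<noteq> 0" "mink v v = 1" "l \<noteq> 0"
  shows "mink v (horo_shift \<xi> v l) = (l + 1/l) / 2"
proof -
  have "mink v (horo_shift \<xi> v l) = l + ((1/l - l) / (2 * mink v \<xi>)) * mink v \<xi>"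
    using assms by (simp add: horo_shift_def mink_simps)
  also have "((1/l - l) / (2 * mink v \<xi>)) * mink v \<xi> = (1/l - l) / 2" using assms by simp
  finally show ?thesis by (simp add: field_simps)
qed

lemma mink_horo_shift_horo_shift:
  assumes "isotropic \<xi>"
  shows "mink (horo_shift \<xi> v l) (horo_shift \<xi> w m) = l * m * mink v w
      + l * ((1/m - m) / (2 * mink w \<xi>)) * mink v \<xi> + m * ((1/l - l) / (2 * mink v \<xi>)) * mink w \<xi>"
  using assms by (simp add: horo_shift_def mink_simps isotropic_mink_self mink_sym[of \<xi> w]
      algebra_simps)

lemma horo_shift_in_hyp_space:
  assumes v: "v \<in> hyp_space" and \<xi>: "isotropic \<xi>" "fst \<xi> > 0" and l: "l > 0"
  shows "horo_shift \<xi> v l \<in> hyp_space"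
proof -
  define u where "u = horo_shift \<xi> v l"
  have a: "mink v \<xi> > 0" by (rule mink_hyp_space_future_pos[OF v \<xi>])
  have uu: "mink u u = 1"
  proof -
    have "mink u u = l * l + 2 * (l * ((1/l - l) / (2 * mink v \<xi>)) * mink v \<xi>)"
      using mink_horo_shift_horo_shift[OF \<xi>(1), of v l v l] v by (simp add: u_def hyp_space_def)
    also have "l * ((1/l - l) / (2 * mink v \<xi>)) * mink v \<xi> = (1 - l * l) / 2"
      using a l by (simp add: field_simps)
    finally show ?thesis by (simp add: diff_divide_distrib)
  qed
  have "fst u \<noteq> 0"
  proof
    assume "fst u = 0"
    hence "mink u u = - (snd u \<bullet> snd u)" by (simp add: mink_def)
    thus False using uu inner_ge_zero[of "snd u"] by linarith
  qed
  moreover have "\<not> fst u < 0"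
  proof
    assume "fst u < 0"
    hence "- u \<in> hyp_space" using uu by (simp add: hyp_space_def mink_def)
    hence "mink (- u) \<xi> > 0" by (rule mink_hyp_space_future_pos[OF _ \<xi>])
    moreover have "mink u \<xi> > 0" using mink_horo_shift_isotropic[OF \<xi>(1)] a l by (simp add: u_def)
    ultimately show False by (simp add: mink_minus_left)
  qed
  ultimately show ?thesis using uu by (simp add: u_def hyp_space_def)
qed

lemma mink_ge_busemann_ratio:
  assumes v: "v \<in> hyp_space" and w: "w \<in> hyp_space" and \<xi>: "isotropic \<xi>"
    and a: "mink v \<xi> > 0" and b: "mink w \<xi> > 0" and r: "1 \<le> r" "r \<le> mink w \<xi> / mink v \<xi>"
  shows "(r + 1/r) / 2 \<le> mink v w"
proof -
  have "r + 1/r \<le> mink w \<xi> / mink v \<xi> + 1 / (mink w \<xi> / mink v \<xi>)"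
    by (rule x_plus_inverse_mono[OF r])
  also have "\<dots> \<le> 2 * mink v w" using busemann_inequality_ratio[OF v w \<xi> a b] by simp
  finally show ?thesis by simp
qed

lemma mink_ratio_lt_if_hdist_lt:
  assumes v: "v \<in> hyp_space" and w: "w \<in> hyp_space" and \<xi>: "isotropic \<xi>"
    and a: "mink v \<xi> > 0" and b: "mink w \<xi> > 0"
    and r: "1 < r" and d: "hdist v w < arcosh ((r + 1/r) / 2)"
  shows "mink w \<xi> / mink v \<xi> < r"
proof (rule ccontr)
  assume "\<not> mink w \<xi> / mink v \<xi> < r"
  hence "(r + 1/r) / 2 \<le> mink v w"
    using r by (intro mink_ge_busemann_ratio[OF v w \<xi> a b]) auto
  hence "arcosh ((r + 1/r) / 2) \<le> hdist v w"
    unfolding hdist_def using half_x_plus_inverse_gt_1[OF r] by (intro arcosh_real_mono) auto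
  thus False using d by simp
qed

context
  fixes \<xi> :: "real \<times> 'a::{real_inner,complete_space}" and e :: real
  assumes \<xi>: "isotropic \<xi>" and \<xi>_future: "fst \<xi> > 0" and e_pos: "e > 0"
begin

lemma horo_proj_in_hyp_space: "v \<in> hyp_space \<Longrightarrow> horo_proj e \<xi> v \<in> hyp_space"
  unfolding horo_proj_def
  by (rule horo_shift_in_hyp_space[OF _ \<xi> \<xi>_future])
    (use mink_hyp_space_future_pos[OF _ \<xi> \<xi>_future] e_pos in auto)

lemma mink_horo_proj_isotropic: "v \<in> hyp_space \<Longrightarrow> mink (horo_proj e \<xi> v) \<xi> = e"
  unfolding horo_proj_def
  using mink_horo_shift_isotropic[OF \<xi>, of v] mink_hyp_space_future_pos[OF _ \<xi> \<xi>_future, of v]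
  by simp

lemma horo_proj_fixed: "mink v \<xi> = e \<Longrightarrow> horo_proj e \<xi> v = v"
  unfolding horo_proj_def using e_pos by (simp add: horo_shift_1)

text \<open>With \<open>a = \<langle>v|\<xi>\<rangle>\<close>, \<open>b = \<langle>w|\<xi>\<rangle>\<close> the Busemann inequality says \<open>(a\<^sup>2 + b\<^sup>2) / (2 a b) \<le> \<langle>v|w\<rangle>\<close>,
  and the projection shrinks the gap by the factor \<open>e\<^sup>2 / (a b)\<close>.\<close>
lemma mink_horo_proj_horo_proj:
  assumes v: "v \<in> hyp_space" and w: "w \<in> hyp_space"
  shows "mink (horo_proj e \<xi> v) (horo_proj e \<xi> w) = 1 + (e\<^sup>2 / (mink v \<xi> * mink w \<xi>)) *
     (mink v w - ((mink v \<xi>)\<^sup>2 + (mink w \<xi>)\<^sup>2) / (2 * mink v \<xi> * mink w \<xi>))"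
proof -
  define a where "a = mink v \<xi>"
  define b where "b = mink w \<xi>"
  have a: "a > 0" and b: "b > 0"
    using mink_hyp_space_future_pos[OF _ \<xi> \<xi>_future] v w by (auto simp: a_def b_def)
  have "mink (horo_proj e \<xi> v) (horo_proj e \<xi> w) = (e/a) * (e/b) * mink v w
      + (e/a) * ((1/(e/b) - e/b) / (2 * b)) * a + (e/b) * ((1/(e/a) - e/a) / (2 * a)) * b"
    unfolding horo_proj_def a_def b_def by (rule mink_horo_shift_horo_shift[OF \<xi>])
  also have "\<dots> = 1 + (e\<^sup>2 / (a * b)) * (mink v w - (a\<^sup>2 + b\<^sup>2) / (2 * a * b))"
    using a b e_pos by (simp add: field_simps power2_eq_square)
  finally show ?thesis by (simp add: a_def b_def)
qed

lemma mink_horo_proj_le: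
  assumes v: "v \<in> hyp_space" and w: "w \<in> hyp_space"
    and K: "e\<^sup>2 / (mink v \<xi> * mink w \<xi>) \<le> K"
  shows "mink (horo_proj e \<xi> v) (horo_proj e \<xi> w) - 1 \<le> K * (mink v w - 1)"
    and "mink (horo_proj e \<xi> v) (horo_proj e \<xi> w) \<le> 1 + K * (mink v w - 1)"
proof -
  define a where "a = mink v \<xi>"
  define b where "b = mink w \<xi>"
  define s where "s = (a\<^sup>2 + b\<^sup>2) / (2 * a * b)"
  have a: "a > 0" and b: "b > 0"
    using mink_hyp_space_future_pos[OF _ \<xi> \<xi>_future] v w by (auto simp: a_def b_def)
  have "2 * a * b \<le> a\<^sup>2 + b\<^sup>2"
    using zero_le_power2[of "a - b"] by (simp add: power2_eq_square algebra_simps)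
  hence s1: "1 \<le> s" using a b by (simp add: s_def)
  have "s = (b / a + a / b) / 2" using a b by (simp add: s_def field_simps power2_eq_square)
  hence "s \<le> mink v w"
    using busemann_inequality_ratio[OF v w \<xi>] a b by (simp add: a_def b_def)
  moreover have "e\<^sup>2 / (a * b) > 0" using a b e_pos by simp
  ultimately have "e\<^sup>2 / (a * b) * (mink v w - s) \<le> K * (mink v w - s)"
    using K by (intro mult_right_mono) (auto simp: a_def b_def)
  also have "\<dots> \<le> K * (mink v w - 1)"
    using s1 K \<open>e\<^sup>2 / (a * b) > 0\<close> by (intro mult_left_mono) (auto simp: a_def b_def)
  finally show "mink (horo_proj e \<xi> v) (horo_proj e \<xi> w) - 1 \<le> K * (mink v w - 1)"
    using mink_horo_proj_horo_proj[OF v w] by (simp add: a_def b_def s_def)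
  thus "mink (horo_proj e \<xi> v) (horo_proj e \<xi> w) \<le> 1 + K * (mink v w - 1)" by simp
qed

lemma hdist_horo_proj_le_outside:
  assumes v: "v \<in> hyp_space" and w: "w \<in> hyp_space" and "e \<le> mink v \<xi>" "e \<le> mink w \<xi>"
  shows "hdist (horo_proj e \<xi> v) (horo_proj e \<xi> w) \<le> hdist v w"
proof (rule hdist_le_if_mink_le[OF horo_proj_in_hyp_space[OF v] horo_proj_in_hyp_space[OF w]])
  have "e * e \<le> mink v \<xi> * mink w \<xi>" using assms e_pos by (intro mult_mono) auto
  hence "e\<^sup>2 / (mink v \<xi> * mink w \<xi>) \<le> 1" using e_pos assms(3,4)
    by (simp add: power2_eq_square)
  from mink_horo_proj_le(2)[OF v w this]
  show "mink (horo_proj e \<xi> v) (horo_proj e \<xi> w) \<le> mink v w" by simp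
qed

lemma hdist_horo_proj_le_scaled:
  assumes v: "v \<in> hyp_space" and w: "w \<in> hyp_space" and K: "1 \<le> K"
    and "e / mink v \<xi> \<le> K" "e / mink w \<xi> \<le> K"
  shows "hdist (horo_proj e \<xi> v) (horo_proj e \<xi> w) \<le> K * hdist v w"
proof -
  have "0 < mink v \<xi>" "0 < mink w \<xi>"
    using mink_hyp_space_future_pos[OF _ \<xi> \<xi>_future] v w by auto
  hence "e\<^sup>2 / (mink v \<xi> * mink w \<xi>) = (e / mink v \<xi>) * (e / mink w \<xi>)"
    by (simp add: power2_eq_square)
  also have "\<dots> \<le> K\<^sup>2"
    unfolding power2_eq_square using assms e_pos \<open>0 < mink v \<xi>\<close> \<open>0 < mink w \<xi>\<close>
    by (intro mult_mono) auto
  finally have "mink (horo_proj e \<xi> v) (horo_proj e \<xi> w) - 1 \<le> K\<^sup>2 * (mink v w - 1)"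
    by (rule mink_horo_proj_le(1)[OF v w])
  hence "arcosh (mink (horo_proj e \<xi> v) (horo_proj e \<xi> w)) \<le> K * arcosh (mink v w)"
    by (intro arcosh_le_mult mink_hyp_space_ge_1 horo_proj_in_hyp_space v w K)
  thus ?thesis by (simp add: hdist_def)
qed

lemma hdist_horo_proj_self_le:
  assumes v: "v \<in> hyp_space" and w: "w \<in> hyp_space" and "mink v \<xi> \<le> e" "e \<le> mink w \<xi>"
  shows "hdist v (horo_proj e \<xi> v) \<le> hdist v w"
proof (rule hdist_le_if_mink_le[OF v horo_proj_in_hyp_space[OF v]])
  define a where "a = mink v \<xi>"
  have a: "a > 0" using mink_hyp_space_future_pos[OF v \<xi> \<xi>_future] by (simp add: a_def)
  have "mink v (horo_proj e \<xi> v) = (e/a + 1/(e/a)) / 2"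
    unfolding horo_proj_def a_def
    by (rule mink_horo_shift_self) (use a v e_pos in \<open>auto simp: a_def hyp_space_def\<close>)
  also have "\<dots> \<le> mink v w"
    by (rule mink_ge_busemann_ratio[OF v w \<xi>])
      (use a assms e_pos mink_hyp_space_future_pos[OF w \<xi> \<xi>_future] in \<open>auto simp: a_def field_simps\<close>)
  finally show "mink v (horo_proj e \<xi> v) \<le> mink v w" .
qed

lemma horo_proj_factor_le:
  assumes x: "x \<in> hyp_space" and v: "v \<in> hyp_space" and "e \<le> mink x \<xi>"
  shows "e / mink v \<xi> \<le> 2 * mink x v"
proof -
  have a: "mink v \<xi> > 0" "mink x \<xi> > 0"
    using mink_hyp_space_future_pos[OF _ \<xi> \<xi>_future] v x by auto
  have "e / mink v \<xi> \<le> mink x \<xi> / mink v \<xi>" using assms a by (simp add: divide_right_mono)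
  moreover have "mink v \<xi> / mink x \<xi> > 0" using a by simp
  ultimately show ?thesis using busemann_inequality_ratio[OF v x \<xi> a] by (simp add: mink_sym)
qed

lemma hboundary_horoball_subset: "hboundary (horoball \<xi> e) \<subseteq> {v \<in> hyp_space. mink v \<xi> = e}"
proof
  fix v assume "v \<in> hboundary (horoball \<xi> e)"
  hence inside: "v \<in> hclosure (horoball \<xi> e)" and outside: "v \<in> hclosure (hyp_space - horoball \<xi> e)"
    by (auto simp: hboundary_def)
  have v: "v \<in> hyp_space" using inside by (simp add: hclosure_def)
  have a: "mink v \<xi> > 0" by (rule mink_hyp_space_future_pos[OF v \<xi> \<xi>_future])
  have arcosh_pos: "0 < arcosh ((r + 1/r) / 2)" if "1 < r" for r :: real
    using half_x_plus_inverse_gt_1[OF that] by simp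
  consider "e < mink v \<xi>" | "mink v \<xi> < e" | "mink v \<xi> = e" by linarith
  thus "v \<in> {v \<in> hyp_space. mink v \<xi> = e}"
  proof cases
    case 1
    define r where "r = mink v \<xi> / e"
    have r: "1 < r" using 1 e_pos by (simp add: r_def)
    then obtain w where w: "w \<in> horoball \<xi> e" and "hdist v w < arcosh ((r + 1/r) / 2)"
      using inside arcosh_pos unfolding hclosure_def by blast
    hence "mink v \<xi> / mink w \<xi> < r"
      using a r by (intro mink_ratio_lt_if_hdist_lt[OF _ v \<xi>]) (auto simp: horoball_def hdist_sym)
    moreover have "r \<le> mink v \<xi> / mink w \<xi>"
      unfolding r_def using w a e_pos by (intro divide_left_mono) (auto simp: horoball_def)
    ultimately show ?thesis by simp
  next
    case 2
    define r where "r = e / mink v \<xi>"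
    have r: "1 < r" using 2 a by (simp add: r_def)
    then obtain w where w: "w \<in> hyp_space - horoball \<xi> e" and "hdist v w < arcosh ((r + 1/r) / 2)"
      using outside arcosh_pos unfolding hclosure_def by blast
    moreover have b: "mink w \<xi> > 0" using w mink_hyp_space_future_pos[OF _ \<xi> \<xi>_future] by blast
    ultimately have "mink w \<xi> / mink v \<xi> < r"
      using a r by (intro mink_ratio_lt_if_hdist_lt[OF v _ \<xi>]) auto
    moreover have "e \<le> mink w \<xi>" using w b by (auto simp: horoball_def)
    hence "r \<le> mink w \<xi> / mink v \<xi>" unfolding r_def using a by (intro divide_right_mono) auto
    ultimately show ?thesis by simp
  qed (use v in simp)
qed

lemma horosphere_subset_hboundary_horoball:
  "{v \<in> hyp_space. mink v \<xi> = e} \<subseteq> hboundary (horoball \<xi> e)"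
proof
  fix v assume "v \<in> {v \<in> hyp_space. mink v \<xi> = e}"
  hence v: "v \<in> hyp_space" and ve: "mink v \<xi> = e" by auto
  have "v \<in> hclosure (hyp_space - horoball \<xi> e)"
    unfolding hclosure_def using v ve hdist_self[OF v] by (auto simp: horoball_def intro!: bexI[of _ v])
  moreover have "v \<in> hclosure (horoball \<xi> e)"
    unfolding hclosure_def
  proof (intro CollectI conjI allI impI)
    show "v \<in> hyp_space" by (rule v)
    fix eps :: real assume eps: "eps > 0"
    define t where "t = eps / 2"
    define l where "l = exp (- t)"
    have t: "t > 0" using eps by (simp add: t_def)
    have l: "l > 0" "l < 1" using t by (auto simp: l_def)
    have "horo_shift \<xi> v l \<in> hyp_space" by (rule horo_shift_in_hyp_space[OF v \<xi> \<xi>_future l(1)])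
    moreover have "mink (horo_shift \<xi> v l) \<xi> = l * e"
      using mink_horo_shift_isotropic[OF \<xi>, of v l] ve e_pos by simp
    ultimately have "horo_shift \<xi> v l \<in> horoball \<xi> e" using l e_pos by (simp add: horoball_def)
    moreover have "mink v (horo_shift \<xi> v l) = cosh t"
      using mink_horo_shift_self[of v \<xi> l] ve e_pos v l
      by (simp add: l_def cosh_field_def exp_minus hyp_space_def field_simps)
    hence "hdist v (horo_shift \<xi> v l) = t" using t by (simp add: hdist_def arcosh_cosh_real)
    ultimately show "\<exists>y\<in>horoball \<xi> e. hdist v y < eps" using t eps
      by (intro bexI[of _ "horo_shift \<xi> v l"]) (auto simp: t_def)
  qed
  ultimately show "v \<in> hboundary (horoball \<xi> e)" by (simp add: hboundary_def)
qed

lemma hboundary_horoball: "hboundary (horoball \<xi> e) = {v \<in> hyp_space. mink v \<xi> = e}"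
  using hboundary_horoball_subset horosphere_subset_hboundary_horoball by (rule antisym)

end

section \<open>Chain distances\<close>

lemma chain_dist_antimono:
  assumes "S \<subseteq> T"
  shows "chain_dist d T x y \<le> chain_dist d S x y"
  unfolding chain_dist_def
  by (intro SUP_mono' INF_superset_mono) (use assms in blast)+

lemma chain_dist_le_if_contraction:
  assumes fS: "\<And>u. u \<in> S \<Longrightarrow> f u \<in> T"
    and lip: "\<And>u w. u \<in> S \<Longrightarrow> w \<in> S \<Longrightarrow> d (f u) (f w) \<le> d u w"
    and "f x = x'" "f y = y'"
  shows "chain_dist d T x' y' \<le> chain_dist d S x y"
  unfolding chain_dist_def
proof (rule SUP_mono', rule INF_mono)
  fix eps m
  assume "m \<in> {\<Sum>i<n. d (p i) (p (Suc i)) |p n. p 0 = x \<and> p n = y \<and> (\<forall>i\<le>n. p i \<in> S) \<and>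
                 (\<forall>i<n. d (p i) (p (Suc i)) \<le> eps)}"
  then obtain p n where m: "m = (\<Sum>i<n. d (p i) (p (Suc i)))" and "p 0 = x" "p n = y"
    and pS: "\<forall>i\<le>n. p i \<in> S" and steps: "\<forall>i<n. d (p i) (p (Suc i)) \<le> eps" by blast
  define q where "q = (\<lambda>i. f (p i))"
  have shorter: "d (q i) (q (Suc i)) \<le> d (p i) (p (Suc i))" if "i < n" for i
    unfolding q_def using pS that by (intro lip) auto
  have "(\<Sum>i<n. d (q i) (q (Suc i))) \<in> {\<Sum>i<n. d (p i) (p (Suc i)) |p n. p 0 = x' \<and> p n = y' \<and>
      (\<forall>i\<le>n. p i \<in> T) \<and> (\<forall>i<n. d (p i) (p (Suc i)) \<le> eps)}"
  proof -
    have "\<forall>i<n. d (q i) (q (Suc i)) \<le> eps" using steps shorter by (meson order.trans)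
    moreover have "\<forall>i\<le>n. q i \<in> T" "q 0 = x'" "q n = y'"
      using pS fS assms(3,4) \<open>p 0 = x\<close> \<open>p n = y\<close> by (simp_all add: q_def)
    ultimately show ?thesis by blast
  qed
  moreover have "(\<Sum>i<n. d (q i) (q (Suc i))) \<le> m" unfolding m by (rule sum_mono) (use shorter in auto)
  ultimately show "\<exists>L\<in>{\<Sum>i<n. d (p i) (p (Suc i)) |p n. p 0 = x' \<and> p n = y' \<and> (\<forall>i\<le>n. p i \<in> T) \<and>
                 (\<forall>i<n. d (p i) (p (Suc i)) \<le> eps)}. ereal L \<le> ereal m" by auto
qed

lemma chain_dist_finiteI:
  assumes "\<And>eps. eps > 0 \<Longrightarrow> \<exists>p n. p 0 = x \<and> p n = y \<and> (\<forall>i\<le>n. p i \<in> S) \<and>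
             (\<forall>i<n. d (p i) (p (Suc i)) \<le> eps) \<and> (\<Sum>i<n. d (p i) (p (Suc i))) \<le> M"
  shows "chain_dist d S x y < \<infinity>"
proof -
  have "chain_dist d S x y \<le> ereal M"
    unfolding chain_dist_def
  proof (rule SUP_least)
    fix eps :: real assume "eps \<in> {0<..}"
    then obtain p n where "p 0 = x \<and> p n = y \<and> (\<forall>i\<le>n. p i \<in> S) \<and>
             (\<forall>i<n. d (p i) (p (Suc i)) \<le> eps) \<and> (\<Sum>i<n. d (p i) (p (Suc i))) \<le> M"
      using assms by fastforce
    thus "(INF L \<in> {\<Sum>i<n. d (p i) (p (Suc i)) |p n. p 0 = x \<and> p n = y \<and> (\<forall>i\<le>n. p i \<in> S) \<and>
                 (\<forall>i<n. d (p i) (p (Suc i)) \<le> eps)}. ereal L) \<le> ereal M"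
      by (intro INF_lower2[of "\<Sum>i<n. d (p i) (p (Suc i))"]) auto
  qed
  also have "\<dots> < \<infinity>" by simp
  finally show ?thesis .
qed

section \<open>Geodesic segments\<close>

definition geodesic :: "real \<times> 'a::real_inner \<Rightarrow> real \<times> 'a \<Rightarrow> real \<Rightarrow> real \<times> 'a" where
  "geodesic x y s = (sinh (hdist x y - s) / sinh (hdist x y)) *\<^sub>R x + (sinh s / sinh (hdist x y)) *\<^sub>R y"

lemma sinh_cosh_identity:
  fixes D s s' :: real
  shows "sinh (D - s) * sinh (D - s') + sinh s * sinh s' + (sinh (D - s) * sinh s' + sinh s * sinh (D - s')) * cosh D
     = cosh (s - s') * (sinh D)\<^sup>2"
proof -
  have c: "cosh D * cosh D = sinh D * sinh D + 1" using cosh_square_eq[of D] by (simp add: power2_eq_square)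
  have "\<And>A C p q p' q' :: real. C * C = A * A + 1 \<Longrightarrow>
     (A * q - C * p) * (A * q' - C * p') + p * p' + ((A * q - C * p) * p' + p * (A * q' - C * p')) * C
     = (q * q' - p * p') * (A * A)" by algebra
  from this[OF c, of "cosh s" "sinh s" "cosh s'" "sinh s'"] show ?thesis
    unfolding sinh_diff cosh_diff power2_eq_square by (simp add: mult.commute)
qed

context
  fixes x y :: "real \<times> 'a::{real_inner,complete_space}"
  assumes x: "x \<in> hyp_space" and y: "y \<in> hyp_space" and D: "hdist x y > 0"
begin

lemma mink_geodesic: "mink (geodesic x y s) (geodesic x y s') = cosh (s - s')"
proof -
  define D where "D = hdist x y"
  have c: "mink x y = cosh D" unfolding D_def by (rule cosh_hdist[OF x y, symmetric])
  have xx: "mink x x = 1" and yy: "mink y y = 1" using x y by (auto simp: hyp_space_def)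
  have S: "sinh D \<noteq> 0" using D by (simp add: D_def)
  have gen: "\<And>a b a' b'. mink (a *\<^sub>R x + b *\<^sub>R y) (a' *\<^sub>R x + b' *\<^sub>R y) = a * a' + b * b' + (a * b' + b * a') * cosh D"
    by (simp add: mink_simps xx yy c mink_sym[of y x] algebra_simps)
  have "mink (geodesic x y s) (geodesic x y s') = (sinh (D - s) / sinh D) * (sinh (D - s') / sinh D) + (sinh s / sinh D) * (sinh s' / sinh D)
        + ((sinh (D - s) / sinh D) * (sinh s' / sinh D) + (sinh s / sinh D) * (sinh (D - s') / sinh D)) * cosh D"
    unfolding geodesic_def D_def[symmetric] by (rule gen)
  also have "\<dots> = (sinh (D - s) * sinh (D - s') + sinh s * sinh s'
        + (sinh (D - s) * sinh s' + sinh s * sinh (D - s')) * cosh D) / (sinh D)^2"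
    by (simp add: power2_eq_square add_divide_distrib distrib_right)
  also have "\<dots> = cosh (s - s')" unfolding sinh_cosh_identity using S by simp
  finally show ?thesis .
qed

lemma geodesic_in_hyp_space: "0 \<le> s \<Longrightarrow> s \<le> hdist x y \<Longrightarrow> geodesic x y s \<in> hyp_space"
proof -
  assume s: "0 \<le> s" "s \<le> hdist x y"
  have m: "mink (geodesic x y s) (geodesic x y s) = 1" using mink_geodesic by simp
  have fx: "fst x > 0" and fy: "fst y > 0" using x y by (auto simp: hyp_space_def)
  have S: "sinh (hdist x y) > 0" using D by simp
  have f: "fst (geodesic x y s) = (sinh (hdist x y - s) * fst x + sinh s * fst y) / sinh (hdist x y)"
    by (simp add: geodesic_def add_divide_distrib)
  have "sinh (hdist x y - s) * fst x + sinh s * fst y > 0"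
  proof (cases "s < hdist x y")
    case True
    hence "sinh (hdist x y - s) * fst x > 0" using fx by simp
    moreover have "sinh s * fst y \<ge> 0" using s fy by simp
    ultimately show ?thesis by linarith
  next
    case False
    hence "s = hdist x y" using s by simp
    thus ?thesis using fy D by simp
  qed
  hence "fst (geodesic x y s) > 0" unfolding f using S by simp
  thus ?thesis using m by (simp add: hyp_space_def)
qed

lemma geodesic_0: "geodesic x y 0 = x"
  using D by (simp add: geodesic_def)

lemma geodesic_hdist: "geodesic x y (hdist x y) = y"
  using D by (simp add: geodesic_def)

lemma hdist_geodesic: "hdist (geodesic x y s) (geodesic x y s') = \<bar>s - s'\<bar>"
proof -
  have "cosh (s - s') = cosh \<bar>s - s'\<bar>" by simp
  thus ?thesis unfolding hdist_def mink_geodesic by (simp only: arcosh_cosh_real abs_ge_zero)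
qed

lemma geodesic_fine_chain:
  assumes "0 < \<delta>"
  obtains N :: nat and z where "0 < N" "hdist x y / N \<le> \<delta>" "z 0 = x" "z N = y"
    "\<And>k. k \<le> N \<Longrightarrow> z k \<in> hyp_space" "\<And>k. k \<le> N \<Longrightarrow> mink x (z k) \<le> cosh (hdist x y)"
    "\<And>k. hdist (z k) (z (Suc k)) = hdist x y / N"
proof -
  obtain N :: nat where N: "hdist x y / \<delta> < N" using reals_Archimedean2 by blast
  have N0: "0 < N" using N D assms by (smt (verit) divide_pos_pos of_nat_0_less_iff)
  define t where "t = hdist x y / N"
  have Nt: "N * t = hdist x y" using N0 by (simp add: t_def)
  define z where "z = (\<lambda>k::nat. geodesic x y (k * t))"
  have range: "0 \<le> k * t" "k * t \<le> hdist x y" if "k \<le> N" for k :: nat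
    using mult_right_mono[of "real k" "real N" t] D Nt that by (simp_all add: t_def)
  show ?thesis
  proof
    show "0 < N" by (rule N0)
    show "hdist x y / N \<le> \<delta>" using N N0 assms by (simp add: field_simps)
    show "z 0 = x" "z N = y" using geodesic_0 geodesic_hdist Nt by (simp_all add: z_def)
    show "z k \<in> hyp_space" if "k \<le> N" for k
      unfolding z_def using geodesic_in_hyp_space range[OF that] by simp
    show "mink x (z k) \<le> cosh (hdist x y)" if "k \<le> N" for k
      using geodesic_0 mink_geodesic[of 0 "k * t"] range[OF that]
        cosh_real_nonneg_le_iff[of "k * t" "hdist x y"]
      by (simp add: z_def)
    have "0 \<le> t" using D by (simp add: t_def)
    thus "hdist (z k) (z (Suc k)) = hdist x y / N" for k
      unfolding z_def hdist_geodesic t_def[symmetric] by (simp add: algebra_simps)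
  qed
qed

end

text \<open>Each point of the geodesic from \<open>x\<close> to \<open>y\<close> satisfies \<open>\<langle>x|\<cdot>\<rangle> \<le> cosh (hdist x y)\<close>, so a map
  that is \<open>L\<close>-Lipschitz on that ball sends its subdivisions to fine chains of length at most
  \<open>L \<cdot> hdist x y\<close>.\<close>
lemma chain_dist_finite_if_lipschitz_retraction:
  assumes x: "x \<in> hyp_space" and y: "y \<in> hyp_space" and L: "0 < L"
    and into: "\<And>v. v \<in> hyp_space \<Longrightarrow> R v \<in> T" and fixed: "R x = x" "R y = y"
    and lip: "\<And>v w. v \<in> hyp_space \<Longrightarrow> w \<in> hyp_space \<Longrightarrow> mink x v \<le> cosh (hdist x y) \<Longrightarrow>
                 mink x w \<le> cosh (hdist x y) \<Longrightarrow> hdist (R v) (R w) \<le> L * hdist v w"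
  shows "chain_dist hdist T x y < \<infinity>"
proof (cases "hdist x y = 0")
  case True
  show ?thesis
  proof (rule chain_dist_finiteI[where M = 0])
    define p where "p = (\<lambda>i::nat. if i = 0 then x else y)"
    have "p 0 = x" "p 1 = y" "\<forall>i\<le>1. p i \<in> T" "(\<Sum>i<1. hdist (p i) (p (Suc i))) = 0"
      using into[OF x] into[OF y] fixed True by (auto simp: p_def)
    thus "\<exists>p n. p 0 = x \<and> p n = y \<and> (\<forall>i\<le>n. p i \<in> T) \<and>
        (\<forall>i<n. hdist (p i) (p (Suc i)) \<le> eps) \<and> (\<Sum>i<n. hdist (p i) (p (Suc i))) \<le> 0"
      if "eps > 0" for eps
      using that by (intro exI[of _ p] exI[of _ 1]) auto
  qed
next
  case False
  hence D: "0 < hdist x y" using hdist_nonneg[OF x y] by simp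
  show ?thesis
  proof (rule chain_dist_finiteI[where M = "L * hdist x y"])
    fix eps :: real assume "eps > 0"
    then obtain N :: nat and z where N: "0 < N" "hdist x y / N \<le> eps / L" and "z 0 = x" "z N = y"
      and z: "\<And>k. k \<le> N \<Longrightarrow> z k \<in> hyp_space" "\<And>k. k \<le> N \<Longrightarrow> mink x (z k) \<le> cosh (hdist x y)"
      and steps: "\<And>k. hdist (z k) (z (Suc k)) = hdist x y / N"
      using geodesic_fine_chain[OF x y D, of "eps / L"] L by auto
    have step: "hdist (R (z k)) (R (z (Suc k))) \<le> L * (hdist x y / N)" if "k < N" for k
      using lip[of "z k" "z (Suc k)"] z[of k] z[of "Suc k"] steps that by simp
    hence "\<forall>k<N. hdist (R (z k)) (R (z (Suc k))) \<le> eps"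
      using N L by (smt (verit) pos_le_divide_eq mult.commute)
    moreover have "\<forall>k\<le>N. R (z k) \<in> T" using into z by simp
    moreover have "R (z 0) = x" "R (z N) = y" using \<open>z 0 = x\<close> \<open>z N = y\<close> fixed by simp_all
    moreover have "(\<Sum>k<N. hdist (R (z k)) (R (z (Suc k)))) \<le> L * hdist x y"
    proof -
      have "(\<Sum>k<N. hdist (R (z k)) (R (z (Suc k)))) \<le> (\<Sum>k<N. L * (hdist x y / N))"
        by (rule sum_mono) (use step in simp)
      also have "\<dots> = L * hdist x y" using N by simp
      finally show ?thesis .
    qed
    ultimately show "\<exists>p n. p 0 = x \<and> p n = y \<and> (\<forall>i\<le>n. p i \<in> T) \<and>
        (\<forall>i<n. hdist (p i) (p (Suc i)) \<le> eps) \<and> (\<Sum>i<n. hdist (p i) (p (Suc i))) \<le> L * hdist x y"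
      by (intro exI[of _ "\<lambda>k. R (z k)"] exI[of _ N]) auto
  qed
qed

section \<open>Families of horoballs with disjoint closures\<close>

lemma hboundary_empty: "hboundary {} = {}"
  unfolding hboundary_def hclosure_def using zero_less_one by blast

lemma subset_hclosure:
  assumes "A \<subseteq> hyp_space"
  shows "A \<subseteq> hclosure A"
proof
  fix x assume "x \<in> A"
  with assms show "x \<in> hclosure A"
    unfolding hclosure_def using hdist_self[of x] by (auto intro!: bexI[of _ x])
qed

locale horoball_packing =
  fixes B :: "'i \<Rightarrow> (real \<times> 'a::{real_inner,complete_space}) set"
    and \<xi> :: "'i \<Rightarrow> real \<times> 'a" and e :: "'i \<Rightarrow> real"
  assumes B_eq: "B i = horoball (\<xi> i) (e i)"
    and \<xi>_isotropic: "isotropic (\<xi> i)" and e_pos: "0 < e i"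
    and disjoint_hclosure: "i \<noteq> j \<Longrightarrow> hclosure (B i) \<inter> hclosure (B j) = {}"
begin

lemma B_subset_hyp_space: "B i \<subseteq> hyp_space"
  by (auto simp: B_eq horoball_def)

lemma B_disjoint: "v \<in> B i \<Longrightarrow> v \<in> B j \<Longrightarrow> i = j"
  using disjoint_hclosure subset_hclosure[OF B_subset_hyp_space] by blast

text \<open>A past-directed \<open>\<xi>\<close> gives an empty horoball, so only nonempty members need a
  future-directed \<open>\<xi>\<close>.\<close>
lemma \<xi>_future_if_nonempty:
  assumes "B i \<noteq> {}"
  shows "0 < fst (\<xi> i)"
proof -
  have "\<not> fst (\<xi> i) < 0"
  proof
    assume "fst (\<xi> i) < 0"
    moreover obtain v where "v \<in> B i" using assms by blast
    hence "v \<in> hyp_space" "0 < mink v (\<xi> i)" by (simp_all add: B_eq horoball_def)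
    ultimately show False using mink_hyp_space_isotropic_sign(2)[OF _ \<xi>_isotropic, of v i] by linarith
  qed
  thus ?thesis using isotropic_fst_nonzero[OF \<xi>_isotropic[of i]] by linarith
qed

lemma mink_ge_if_not_in_B:
  assumes "B i \<noteq> {}" "v \<in> hyp_space" "v \<notin> B i"
  shows "e i \<le> mink v (\<xi> i)"
proof -
  have "0 < mink v (\<xi> i)"
    by (rule mink_hyp_space_future_pos[OF assms(2) \<xi>_isotropic \<xi>_future_if_nonempty[OF assms(1)]])
  thus ?thesis using assms(2,3) by (auto simp: B_eq horoball_def not_less)
qed

lemma hboundary_B: "B i \<noteq> {} \<Longrightarrow> hboundary (B i) = {v \<in> hyp_space. mink v (\<xi> i) = e i}"
  using hboundary_horoball[OF \<xi>_isotropic \<xi>_future_if_nonempty e_pos] by (simp add: B_eq)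

lemma hboundary_B_subset_complement: "hboundary (B i) \<subseteq> hyp_space - (\<Union>j. B j)"
proof
  fix v assume v: "v \<in> hboundary (B i)"
  hence "B i \<noteq> {}" using hboundary_empty by auto
  hence "v \<in> hyp_space" "v \<notin> B i" using v hboundary_B by (auto simp: B_eq horoball_def)
  moreover have "v \<notin> B j" if "j \<noteq> i" for j
    using v disjoint_hclosure[OF that] subset_hclosure[OF B_subset_hyp_space[of j]]
    by (auto simp: hboundary_def)
  ultimately show "v \<in> hyp_space - (\<Union>j. B j)" by (metis DiffI UN_E)
qed

lemma horo_proj_in_hboundary_B:
  "B i \<noteq> {} \<Longrightarrow> v \<in> hyp_space \<Longrightarrow> horo_proj (e i) (\<xi> i) v \<in> hboundary (B i)"
  using horo_proj_in_hyp_space[OF \<xi>_isotropic \<xi>_future_if_nonempty e_pos]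
    mink_horo_proj_isotropic[OF \<xi>_isotropic \<xi>_future_if_nonempty e_pos]
  by (simp add: hboundary_B)

theorem chain_dist_complement_eq_hboundary:
  assumes x: "x \<in> hboundary (B i)" and y: "y \<in> hboundary (B i)"
  shows "chain_dist hdist (hyp_space - (\<Union>j. B j)) x y = chain_dist hdist (hboundary (B i)) x y"
proof (rule antisym)
  show "chain_dist hdist (hyp_space - (\<Union>j. B j)) x y \<le> chain_dist hdist (hboundary (B i)) x y"
    by (rule chain_dist_antimono[OF hboundary_B_subset_complement])
  have ne: "B i \<noteq> {}" using x hboundary_empty by auto
  note horo_proj = horo_proj_in_hyp_space hdist_horo_proj_le_outside horo_proj_fixed
  note horo_proj = horo_proj[OF \<xi>_isotropic \<xi>_future_if_nonempty[OF ne] e_pos]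
  show "chain_dist hdist (hboundary (B i)) x y \<le> chain_dist hdist (hyp_space - (\<Union>j. B j)) x y"
  proof (rule chain_dist_le_if_contraction[where f = "horo_proj (e i) (\<xi> i)"])
    show "horo_proj (e i) (\<xi> i) u \<in> hboundary (B i)" if "u \<in> hyp_space - (\<Union>j. B j)" for u
      using that horo_proj_in_hboundary_B[OF ne] by simp
    show "hdist (horo_proj (e i) (\<xi> i) u) (horo_proj (e i) (\<xi> i) w) \<le> hdist u w"
      if "u \<in> hyp_space - (\<Union>j. B j)" "w \<in> hyp_space - (\<Union>j. B j)" for u w
      using that by (intro horo_proj(2) mink_ge_if_not_in_B[OF ne]) auto
    show "horo_proj (e i) (\<xi> i) x = x" "horo_proj (e i) (\<xi> i) y = y"
      using x y hboundary_B[OF ne] by (auto intro: horo_proj(3))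
  qed
qed

text \<open>The index chosen by \<open>SOME\<close> is unique by disjointness.\<close>
definition retract :: "real \<times> 'a \<Rightarrow> real \<times> 'a" where
  "retract v = (if \<exists>i. v \<in> B i then horo_proj (e (SOME i. v \<in> B i)) (\<xi> (SOME i. v \<in> B i)) v else v)"

lemma retract_in_B:
  assumes "v \<in> B i"
  shows "retract v = horo_proj (e i) (\<xi> i) v"
proof -
  have "(SOME j. v \<in> B j) = i" using assms B_disjoint by (metis someI)
  thus ?thesis using assms by (auto simp: retract_def)
qed

lemma retract_outside: "\<forall>i. v \<notin> B i \<Longrightarrow> retract v = v"
  by (simp add: retract_def)

lemma retract_in_complement:
  assumes v: "v \<in> hyp_space"
  shows "retract v \<in> hyp_space - (\<Union>j. B j)"
proof (cases "\<exists>i. v \<in> B i")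
  case True
  then obtain i where vi: "v \<in> B i" by blast
  hence "retract v \<in> hboundary (B i)"
    unfolding retract_in_B[OF vi] by (intro horo_proj_in_hboundary_B[OF _ v]) auto
  thus ?thesis using hboundary_B_subset_complement by blast
next
  case False
  thus ?thesis using v retract_outside by auto
qed

lemma hdist_retract_le:
  assumes vi: "v \<in> B i" and w: "w \<in> hyp_space" "w \<notin> B i"
  shows "hdist v (retract v) \<le> hdist v w"
proof -
  have ne: "B i \<noteq> {}" and v: "v \<in> hyp_space" using vi B_subset_hyp_space by auto
  show ?thesis unfolding retract_in_B[OF vi]
    using vi mink_ge_if_not_in_B[OF ne w]
    by (intro hdist_horo_proj_self_le[OF \<xi>_isotropic \<xi>_future_if_nonempty[OF ne] e_pos v w(1)])
      (auto simp: B_eq horoball_def)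
qed

lemma hdist_retract_across:
  assumes vi: "v \<in> B i" and w: "w \<in> hyp_space" and wi: "w \<notin> B i"
  shows "hdist (retract v) (retract w) \<le> 3 * hdist v w"
proof -
  have v: "v \<in> hyp_space" using vi B_subset_hyp_space by auto
  have Rv: "retract v \<in> hyp_space" and Rw: "retract w \<in> hyp_space"
    using retract_in_complement v w by auto
  have "hdist w (retract w) \<le> hdist v w"
  proof (cases "\<exists>j. w \<in> B j")
    case True
    then obtain j where wj: "w \<in> B j" by blast
    hence "v \<notin> B j" using B_disjoint vi wi by metis
    thus ?thesis using hdist_retract_le[OF wj v] by (simp add: hdist_sym)
  next
    case False
    thus ?thesis using retract_outside hdist_self[OF w] hdist_nonneg[OF v w] by auto
  qed
  moreover have "hdist (retract v) v \<le> hdist v w"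
    using hdist_retract_le[OF vi w wi] by (simp add: hdist_sym)
  moreover have "hdist (retract v) (retract w) \<le> hdist (retract v) v + hdist v w + hdist w (retract w)"
    using hdist_triangle[OF Rv v Rw] hdist_triangle[OF v w Rw] by linarith
  ultimately show ?thesis by linarith
qed

lemma hdist_retract_within:
  assumes vi: "v \<in> B i" and wi: "w \<in> B i" and x: "x \<in> hyp_space - (\<Union>j. B j)"
    and "mink x v \<le> C" "mink x w \<le> C"
  shows "hdist (retract v) (retract w) \<le> 2 * C * hdist v w"
proof -
  have ne: "B i \<noteq> {}" using vi by auto
  have v: "v \<in> hyp_space" and w: "w \<in> hyp_space" and xh: "x \<in> hyp_space"
    using vi wi x B_subset_hyp_space by auto
  have "e i \<le> mink x (\<xi> i)" using x by (intro mink_ge_if_not_in_B[OF ne]) auto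
  note factor = horo_proj_factor_le[OF \<xi>_isotropic \<xi>_future_if_nonempty[OF ne] e_pos xh _ this]
  have "1 \<le> mink x v" by (rule mink_hyp_space_ge_1[OF xh v])
  show ?thesis unfolding retract_in_B[OF vi] retract_in_B[OF wi]
    using factor[OF v] factor[OF w] assms \<open>1 \<le> mink x v\<close>
    by (intro hdist_horo_proj_le_scaled[OF \<xi>_isotropic \<xi>_future_if_nonempty[OF ne] e_pos v w]) auto
qed

lemma hdist_retract_near:
  assumes v: "v \<in> hyp_space" and w: "w \<in> hyp_space" and x: "x \<in> hyp_space - (\<Union>j. B j)"
    and C: "mink x v \<le> C" "mink x w \<le> C"
  shows "hdist (retract v) (retract w) \<le> (3 + 2 * C) * hdist v w"
proof -
  have d: "0 \<le> hdist v w" using hdist_nonneg[OF v w] .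
  have "1 \<le> C" using C mink_hyp_space_ge_1[of x v] x v by auto
  hence le: "2 * C * hdist v w \<le> (3 + 2 * C) * hdist v w" "3 * hdist v w \<le> (3 + 2 * C) * hdist v w"
    "hdist v w \<le> (3 + 2 * C) * hdist v w"
    using d by (simp_all add: mult_right_mono mult_le_cancel_right1)
  consider (same) i where "v \<in> B i" "w \<in> B i"
    | (across) i where "v \<in> B i" "w \<notin> B i"
    | (across') i where "w \<in> B i" "v \<notin> B i"
    | (outside) "\<forall>i. v \<notin> B i \<and> w \<notin> B i" by blast
  thus ?thesis
  proof cases
    case same
    thus ?thesis using hdist_retract_within[OF same x C] le(1) by linarith
  next
    case across
    thus ?thesis using hdist_retract_across[OF across(1) w across(2)] le(2) by linarith
  next
    case across'
    thus ?thesis using hdist_retract_across[OF across'(1) v across'(2)] le(2)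
      by (simp add: hdist_sym)
  next
    case outside
    thus ?thesis using retract_outside le(3) by simp
  qed
qed

theorem chain_dist_complement_finite:
  assumes x: "x \<in> hyp_space - (\<Union>j. B j)" and y: "y \<in> hyp_space - (\<Union>j. B j)"
  shows "chain_dist hdist (hyp_space - (\<Union>j. B j)) x y < \<infinity>"
proof (rule chain_dist_finite_if_lipschitz_retraction)
  show "0 < 3 + 2 * cosh (hdist x y)" by (simp add: add_pos_nonneg)
  show "hdist (retract v) (retract w) \<le> (3 + 2 * cosh (hdist x y)) * hdist v w"
    if "v \<in> hyp_space" "w \<in> hyp_space" "mink x v \<le> cosh (hdist x y)" "mink x w \<le> cosh (hdist x y)"
    for v w
    using hdist_retract_near[OF that(1,2) x that(3,4)] .
qed (use x y retract_in_complement retract_outside in auto)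

end

theorem lemma4p3:
  fixes B :: "'i \<Rightarrow> (real \<times> 'a::{real_inner,complete_space}) set"
    and Q :: "(real \<times> 'a) set"
  assumes horo: "\<And>i. open_horoball (B i)"
    and disj: "\<And>i j. i \<noteq> j \<Longrightarrow> hclosure (B i) \<inter> hclosure (B j) = {}"
    and Q_def: "Q = (\<Union>i. B i)"
  shows "(\<forall>x\<in>hyp_space - Q. \<forall>y\<in>hyp_space - Q. chain_dist hdist (hyp_space - Q) x y < \<infinity>)
       \<and> (\<forall>i. \<forall>x\<in>hboundary (B i). \<forall>y\<in>hboundary (B i).
            chain_dist hdist (hyp_space - Q) x y = chain_dist hdist (hboundary (B i)) x y)"
proof -
  have "\<forall>i. \<exists>\<xi> e. isotropic \<xi> \<and> 0 < e \<and> B i = horoball \<xi> e"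
    using horo unfolding open_horoball_def horoball_def by blast
  then obtain \<xi> e where "\<And>i. isotropic (\<xi> i) \<and> 0 < e i \<and> B i = horoball (\<xi> i) (e i)"
    by metis
  then interpret horoball_packing B \<xi> e
    using disj by unfold_locales auto
  show ?thesis
    unfolding Q_def using chain_dist_complement_finite chain_dist_complement_eq_hboundary by blast
qed

end
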